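(* Let $\gamma:[0,1]\to\mathbb{R}^2$ be a $C^1$ curve with constant speed $c>0$ (i.e. $\|\gamma'(s)\|=c$ for all $s$), and let $\theta:[0,1]\to\mathbb{R}$ be a turning angle function for $\gamma$. If $\theta(1)-\theta(0)=2\pi m$ with $m\in\mathbb{Z}$, $m\neq 0$, then there exist cuts $0\le c_1\le c_2\le 1$ such that the rearranged curve $r_{(c_1,c_2)}$ is a closed $C^1$ curve, i.e. $r_{(c_1,c_2)}(0)=r_{(c_1,c_2)}(1)$ and $r_{(c_1,c_2)}'(0)=r_{(c_1,c_2)}'(1)$.
   Context: A turning angle function for $\gamma$ is a continuous function $\theta$ with $\gamma'(s)=c(\cos\theta(s),\sin\theta(s))$. Concatenation: if $\alpha$ on $[a_1,b_1]$ and $\beta$ on $[a_2,b_2]$ are $C^1$ planar curves with the same constant speed, $\alpha*\beta$ is the curve on $[0,(b_1-a_1)+(b_2-a_2)]$ that equals $\alpha(s+a_1)$ for $s\le b_1-a_1$ and equals $T(\beta(s-(b_1-a_1)+a_2))$ afterwards, where $T$ is the orientation-preserving rigid motion of $\mathbb{R}^2$ sending $\beta(a_2)$ to $\alpha(b_1)$ and the unit tangent $\beta'(a_2)/c$ to $\alpha'(b_1)/c$ (so $T$ also sends the rotated-by-$\pi/2$ normal to the corresponding normal). This operation is associative. For cuts $0\le c_1\le c_2\le 1$, let $\gamma_1,\gamma_2,\gamma_3$ be the restrictions of $\gamma$ to $[0,c_1]$, $[c_1,c_2]$, $[c_2,1]$ respectively (an arc of length zero is a point that still carries the tangent direction of $\gamma$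 at that parameter). The rearranged curve is $r_{(c_1,c_2)}:=\gamma_1*\gamma_3*\gamma_2:[0,1]\to\mathbb{R}^2$. *)

theory Defs
  imports "HOL-Analysis.Analysis"
begin

text \<open>The plane R^2 is identified with the complex numbers. A planar C^1 curve on [a,b]
  is represented together with its derivative as a tuple (f, f', a, b).\<close>

type_synonym pcurve = "(real \<Rightarrow> complex) \<times> (real \<Rightarrow> complex) \<times> real \<times> real"

text \<open>The orientation-preserving rigid motion sending point p to q and the direction u to
  the direction v (where norm u = norm v): rotation by v/u followed by translation.\<close>
definition rigid_motion :: "complex \<Rightarrow> complex \<Rightarrow> complex \<Rightarrow> complex \<Rightarrow> complex \<Rightarrow> complex" where
  "rigid_motion p u q v = (\<lambda>z. q + (v / u) * (z - p))"

definition concat :: "pcurve \<Rightarrow> pcurve \<Rightarrow> pcurve" where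
  "concat A B = (case A of (f, f', a1, b1) \<Rightarrow> case B of (g, g', a2, b2) \<Rightarrow>
     (let L1 = b1 - a1; L2 = b2 - a2;
          T = rigid_motion (g a2) (g' a2) (f b1) (f' b1)
      in ((\<lambda>s. if s \<le> L1 then f (s + a1) else T (g (s - L1 + a2))),
          (\<lambda>s. if s \<le> L1 then f' (s + a1) else (f' b1 / g' a2) * g' (s - L1 + a2)),
          0, L1 + L2)))"

definition restr :: "(real \<Rightarrow> complex) \<Rightarrow> (real \<Rightarrow> complex) \<Rightarrow> real \<Rightarrow> real \<Rightarrow> pcurve" where
  "restr f f' a b = (f, f', a, b)"

definition rearranged :: "(real \<Rightarrow> complex) \<Rightarrow> (real \<Rightarrow> complex) \<Rightarrow> real \<Rightarrow> real \<Rightarrow> (real \<Rightarrow> complex)" where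
  "rearranged f f' c1 c2 =
     fst (concat (concat (restr f f' 0 c1) (restr f f' c2 1)) (restr f f' c1 c2))"

end

theory Submission
  imports Defs
begin

(* Let F(c1, c2) := r(1) - r(0) for the rearranged curve r = r_(c1,c2). Rotating the pieces into
  place makes r a C^1 curve with r'(0) = \<gamma>'(0) and r'(1) = \<gamma>'(1), and these agree because the
  total turn is a multiple of 2 pi; so it suffices to find a zero of F on the triangle
  0 <= c1 <= c2 <= 1. On the sides c2 = 1 and c1 = c2, F is the constant \<gamma>(1) - \<gamma>(0), while on
  the side c1 = 0 it equals exp(i (\<theta>(0) - \<theta>(s))) (\<gamma>(1) - \<gamma>(0)), whose argument turns by
  -2 pi m. A nowhere vanishing F would have a continuous logarithm on the convex triangle, and
  its increments along the three sides would have to sum both to 0 and to -2 pi i m. *)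

fun C1_curve :: "pcurve \<Rightarrow> bool" where
  "C1_curve (f, f', a, b) \<longleftrightarrow> a \<le> b \<and>
     (\<forall>s\<in>{a..b}. (f has_vector_derivative f' s) (at s within {a..b})) \<and>
     continuous_on {a..b} f'"

lemma C1_curve_cong:
  assumes "C1_curve (f, f', a, b)"
    and "\<And>s. s \<in> {a..b} \<Longrightarrow> h s = f s" "\<And>s. s \<in> {a..b} \<Longrightarrow> h' s = f' s"
  shows "C1_curve (h, h', a, b)"
  using assms by (auto intro: has_vector_derivative_transform continuous_on_eq)

lemma C1_curve_subinterval:
  assumes "C1_curve (f, f', a, b)" "a \<le> c" "c \<le> d" "d \<le> b"
  shows "C1_curve (f, f', c, d)"
proof -
  have sub: "{c..d} \<subseteq> {a..b}"
    using assms by auto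
  have "(f has_vector_derivative f' s) (at s within {c..d})" if "s \<in> {c..d}" for s
    using assms(1) sub that by (auto intro: has_vector_derivative_within_subset[OF _ sub])
  moreover have "continuous_on {c..d} f'"
    using assms(1) continuous_on_subset[OF _ sub] by auto
  ultimately show ?thesis
    using assms by auto
qed

lemma C1_curve_glue:
  assumes "C1_curve (f, f', a, m)" "C1_curve (f, f', m, b)"
  shows "C1_curve (f, f', a, b)"
proof -
  have split: "{a..b} = {a..m} \<union> {m..b}"
    and left: "{a..m} \<union> (closure {a..m} \<inter> closure {m..b}) = {a..m}"
    and right: "{m..b} \<union> (closure {a..m} \<inter> closure {m..b}) = {m..b}"
    using assms by auto
  have "(f has_vector_derivative f' s) (at s within {a..b})" if "s \<in> {a..b}" for s
    using has_vector_derivative_If_within_closures[of s "{a..m}" "{m..b}" "{a..b}" f f' f f']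
      assms that unfolding split left right by auto
  moreover have "continuous_on {a..b} f'"
    using assms split continuous_on_closed_Un[of "{a..m}" "{m..b}" f'] by auto
  ultimately show ?thesis
    using assms by auto
qed

lemma C1_curve_shift:
  assumes "C1_curve (f, f', a, b)"
  shows "C1_curve (\<lambda>s. f (s + d), \<lambda>s. f' (s + d), a - d, b - d)"
proof -
  have image: "(\<lambda>s. s + d) ` {a - d..b - d} = {a..b}"
    by simp
  have "((\<lambda>s. f (s + d)) has_vector_derivative f' (s + d)) (at s within {a - d..b - d})"
    if "s \<in> {a - d..b - d}" for s
  proof -
    have "((\<lambda>s. s + d) has_vector_derivative 1) (at s within {a - d..b - d})"
      by (auto intro!: derivative_eq_intros)
    moreover have "(f has_vector_derivative f' (s + d)) (at (s + d) within (\<lambda>s. s + d) ` {a - d..b - d})"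
      using assms that unfolding image by auto
    ultimately have "((f \<circ> (\<lambda>s. s + d)) has_vector_derivative 1 *\<^sub>R f' (s + d)) (at s within {a - d..b - d})"
      by (rule vector_diff_chain_within)
    then show ?thesis
      by (simp add: o_def)
  qed
  moreover have "continuous_on {a - d..b - d} (\<lambda>s. f' (s + d))"
    using assms image by (auto intro!: continuous_on_compose2[of "{a..b}" f'] continuous_intros)
  ultimately show ?thesis
    using assms by auto
qed

lemma C1_curve_affine:
  assumes "C1_curve (f, f', a, b)"
  shows "C1_curve (\<lambda>s. p + k * f s, \<lambda>s. k * f' s, a, b)"
  using assms by (auto intro!: derivative_eq_intros continuous_intros)

lemma concat_eq:
  "concat (f, f', a1, b1) (g, g', a2, b2) =
    (\<lambda>s. if s \<le> b1 - a1 then f (s + a1)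
         else f b1 + (f' b1 / g' a2) * (g (s - (b1 - a1) + a2) - g a2),
     \<lambda>s. if s \<le> b1 - a1 then f' (s + a1)
         else (f' b1 / g' a2) * g' (s - (b1 - a1) + a2),
     0, (b1 - a1) + (b2 - a2))"
  by (simp only: concat_def rigid_motion_def Let_def prod.case)

lemma C1_curve_concat:
  assumes f: "C1_curve (f, f', a1, b1)" and g: "C1_curve (g, g', a2, b2)" and "g' a2 \<noteq> 0"
  shows "C1_curve (concat (f, f', a1, b1) (g, g', a2, b2))"
proof -
  define L1 where "L1 = b1 - a1"
  define k where "k = f' b1 / g' a2"
  have "C1_curve (\<lambda>s. f (s + a1), \<lambda>s. f' (s + a1), 0, L1)"
    using C1_curve_shift[OF f, of a1] by (simp add: L1_def)
  then have first: "C1_curve (fst (concat (f, f', a1, b1) (g, g', a2, b2)),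
      fst (snd (concat (f, f', a1, b1) (g, g', a2, b2))), 0, L1)"
    by (rule C1_curve_cong) (auto simp: concat_eq L1_def)
  have "C1_curve (\<lambda>s. f b1 + k * (g (s - L1 + a2) - g a2), \<lambda>s. k * g' (s - L1 + a2),
      L1, L1 + (b2 - a2))"
    using C1_curve_affine[OF C1_curve_shift[OF g, of "a2 - L1"], of "f b1 - k * g a2" k]
    by (simp add: algebra_simps)
  then have second: "C1_curve (fst (concat (f, f', a1, b1) (g, g', a2, b2)),
      fst (snd (concat (f, f', a1, b1) (g, g', a2, b2))), L1, L1 + (b2 - a2))"
    by (rule C1_curve_cong) (use \<open>g' a2 \<noteq> 0\<close> in \<open>auto simp: concat_eq L1_def k_def\<close>)
  show ?thesis
    using C1_curve_glue[OF first second] by (simp add: concat_eq L1_def)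
qed

lemma concat_endpoints:
  assumes "a1 \<le> b1" "a2 \<le> b2" "g' a2 \<noteq> 0"
    and "concat (f, f', a1, b1) (g, g', a2, b2) = (h, h', z, e)"
  shows "z = 0" "e = (b1 - a1) + (b2 - a2)" "h 0 = f a1" "h' 0 = f' a1"
    "h e = f b1 + (f' b1 / g' a2) * (g b2 - g a2)" "h' e = (f' b1 / g' a2) * g' b2"
  using assms by (auto simp: concat_eq)

(* r(1) - r(0) for r = rearranged \<gamma> \<gamma>' c1 c2 (see C1_curve_rearranged): the concatenation
  rotates \<gamma>_3 by \<gamma>'(c1)/\<gamma>'(c2) and then \<gamma>_2 by \<gamma>'(1)/\<gamma>'(c2). *)
definition rearranged_gap :: "(real \<Rightarrow> complex) \<Rightarrow> (real \<Rightarrow> complex) \<Rightarrow> real \<Rightarrow> real \<Rightarrow> complex" where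
  "rearranged_gap \<gamma> \<gamma>' c1 c2 = \<gamma> c1 - \<gamma> 0 + (\<gamma>' c1 / \<gamma>' c2) * (\<gamma> 1 - \<gamma> c2)
     + (\<gamma>' 1 / \<gamma>' c2) * (\<gamma> c2 - \<gamma> c1)"

lemma C1_curve_rearranged:
  assumes \<gamma>: "C1_curve (\<gamma>, \<gamma>', 0, 1)" and nz: "\<And>s. s \<in> {0..1} \<Longrightarrow> \<gamma>' s \<noteq> 0"
    and cuts: "0 \<le> c1" "c1 \<le> c2" "c2 \<le> 1"
  obtains r' where "C1_curve (rearranged \<gamma> \<gamma>' c1 c2, r', 0, 1)" "r' 0 = \<gamma>' 0" "r' 1 = \<gamma>' 1"
    "rearranged \<gamma> \<gamma>' c1 c2 1 - rearranged \<gamma> \<gamma>' c1 c2 0 = rearranged_gap \<gamma> \<gamma>' c1 c2"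
proof -
  obtain h1 h1' z1 e1 where I: "concat (\<gamma>, \<gamma>', 0, c1) (\<gamma>, \<gamma>', c2, 1) = (h1, h1', z1, e1)"
    using prod_cases4 by blast
  obtain h h' z e where O: "concat (h1, h1', z1, e1) (\<gamma>, \<gamma>', c1, c2) = (h, h', z, e)"
    using prod_cases4 by blast
  have r: "rearranged \<gamma> \<gamma>' c1 c2 = h"
    unfolding rearranged_def restr_def I O by simp
  have pieces: "C1_curve (\<gamma>, \<gamma>', 0, c1)" "C1_curve (\<gamma>, \<gamma>', c2, 1)" "C1_curve (\<gamma>, \<gamma>', c1, c2)"
    using C1_curve_subinterval[OF \<gamma>] cuts by auto
  have nz_cuts: "\<gamma>' c1 \<noteq> 0" "\<gamma>' c2 \<noteq> 0"
    using nz cuts by auto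
  note E1 = concat_endpoints[OF cuts(1) cuts(3) nz_cuts(2) I]
  have k: "h1' e1 / \<gamma>' c1 = \<gamma>' 1 / \<gamma>' c2"
    using E1(2,6) nz_cuts by simp
  have "z1 \<le> e1"
    using E1(1,2) cuts by simp
  note E2 = concat_endpoints[OF this cuts(2) nz_cuts(1) O, unfolded k]
  have "e = 1"
    using E1(1,2) E2(2) by simp
  have "C1_curve (h1, h1', z1, e1)"
    using C1_curve_concat[OF pieces(1,2) nz_cuts(2)] unfolding I .
  then have "C1_curve (h, h', 0, 1)"
    using C1_curve_concat[OF _ pieces(3) nz_cuts(1), of h1 h1' z1 e1] E2(1) \<open>e = 1\<close>
    unfolding O by blast
  moreover have "h 1 - h 0 = rearranged_gap \<gamma> \<gamma>' c1 c2"
    using E1 E2 \<open>e = 1\<close> by (simp add: rearranged_gap_def)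
  ultimately show ?thesis
    using that[of h'] E1 E2 \<open>e = 1\<close> nz_cuts unfolding r by simp
qed

lemma continuous_exp_eq_imp_diff_eq:
  fixes g h :: "'a::topological_space \<Rightarrow> complex"
  assumes S: "connected S" and "continuous_on S g" "continuous_on S h"
    and exp_eq: "\<And>x. x \<in> S \<Longrightarrow> exp (g x) = exp (h x)" and "a \<in> S" "b \<in> S"
  shows "g a - h a = g b - h b"
proof -
  have "(\<lambda>x. g x - h x) constant_on S"
  proof (rule continuous_discrete_range_constant[OF S])
    show "continuous_on S (\<lambda>x. g x - h x)"
      using assms by (intro continuous_intros)
    show "\<exists>e>0. \<forall>y. y \<in> S \<and> g y - h y \<noteq> g x - h x \<longrightarrow> e \<le> cmod (g y - h y - (g x - h x))"
      if "x \<in> S" for x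
    proof -
      have "g y - g x = h y - h x"
        if "y \<in> S" "cmod (g y - g x - (h y - h x)) < 2 * pi" for y
      proof (rule exp_complex_eqI)
        have "\<bar>Im (g y - g x) - Im (h y - h x)\<bar> \<le> cmod (g y - g x - (h y - h x))"
          by (metis abs_Im_le_cmod minus_complex.simps(2))
        then show "\<bar>Im (g y - g x) - Im (h y - h x)\<bar> < 2 * pi"
          using that by linarith
        show "exp (g y - g x) = exp (h y - h x)"
          using exp_eq that \<open>x \<in> S\<close> by (simp add: exp_diff)
      qed
      then show ?thesis
        by (rule_tac x="2 * pi" in exI) (fastforce simp add: algebra_simps)
    qed
  qed
  then show ?thesis
    using assms by (auto simp: constant_on_def)
qed

lemma continuous_logarithm_along_path:
  fixes F g :: "'a::topological_space \<Rightarrow> complex" and p :: "real \<Rightarrow> 'a" and \<phi> :: "real \<Rightarrow> complex"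
  assumes "continuous_on S g" "\<And>x. x \<in> S \<Longrightarrow> F x = exp (g x)"
    and "continuous_on {0..1} p" "p ` {0..1} \<subseteq> S"
    and "continuous_on {0..1} \<phi>" "\<And>t. t \<in> {0..1} \<Longrightarrow> F (p t) = exp (\<phi> t)"
  shows "g (p 1) - g (p 0) = \<phi> 1 - \<phi> 0"
proof -
  have "g (p 0) - \<phi> 0 = g (p 1) - \<phi> 1"
  proof (rule continuous_exp_eq_imp_diff_eq[of "{0..1}"])
    show "continuous_on {0..1} (\<lambda>t. g (p t))"
      using assms by (auto intro: continuous_on_compose2)
    show "exp (g (p t)) = exp (\<phi> t)" if "t \<in> {0..1}" for t
      using assms(2,4,6) that by (metis image_subset_iff)
  qed (use assms in auto)
  then show ?thesis
    by (simp add: algebra_simps)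
qed

definition cut_triangle :: "(real \<times> real) set" where
  "cut_triangle = {x. 0 \<le> fst x \<and> fst x \<le> snd x \<and> snd x \<le> 1}"

lemma convex_cut_triangle: "convex cut_triangle"
  unfolding cut_triangle_def convex_alt by (auto intro!: add_mono mult_left_mono convex_bound_le)

lemma continuous_on_rearranged_gap:
  assumes \<gamma>: "continuous_on {0..1} \<gamma>" and \<gamma>': "continuous_on {0..1} \<gamma>'"
    and nz: "\<And>s. s \<in> {0..1} \<Longrightarrow> \<gamma>' s \<noteq> 0"
  shows "continuous_on cut_triangle (\<lambda>x. rearranged_gap \<gamma> \<gamma>' (fst x) (snd x))"
proof -
  have "fst ` cut_triangle \<subseteq> {0..1}" "snd ` cut_triangle \<subseteq> {0..1}"
    by (auto simp: cut_triangle_def)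
  then have on_triangle: "continuous_on cut_triangle (\<lambda>x. h (fst x))"
      "continuous_on cut_triangle (\<lambda>x. h (snd x))"
    if "continuous_on {0..1} h" for h :: "real \<Rightarrow> complex"
    using continuous_on_compose2[OF that continuous_on_fst[OF continuous_on_id']]
      continuous_on_compose2[OF that continuous_on_snd[OF continuous_on_id']] by auto
  show ?thesis
    unfolding rearranged_gap_def using nz
    by (intro continuous_on_add continuous_on_diff continuous_on_mult continuous_on_divide
        continuous_on_const on_triangle[OF \<gamma>] on_triangle[OF \<gamma>']) (auto simp: cut_triangle_def)
qed

lemma no_winding_on_cut_triangle:
  fixes F :: "real \<times> real \<Rightarrow> complex" and \<phi> :: "real \<Rightarrow> complex"
  assumes F: "continuous_on cut_triangle F" and F_nz: "\<And>x. x \<in> cut_triangle \<Longrightarrow> F x \<noteq> 0"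
    and \<phi>: "continuous_on {0..1} \<phi>" "\<And>t. t \<in> {0..1} \<Longrightarrow> F (0, t) = exp (\<phi> t)"
    and top: "\<And>t. t \<in> {0..1} \<Longrightarrow> F (t, 1) = F (1, 1)"
    and diagonal: "\<And>t. t \<in> {0..1} \<Longrightarrow> F (t, t) = F (1, 1)"
  shows "\<phi> 1 = \<phi> 0"
proof -
  obtain g where g: "continuous_on cut_triangle g" "\<And>x. x \<in> cut_triangle \<Longrightarrow> F x = exp (g x)"
    using continuous_logarithm_on_contractible[OF F _ F_nz]
      convex_imp_contractible[OF convex_cut_triangle] by blast
  have side: "g (p 1) - g (p 0) = \<psi> 1 - \<psi> 0"
    if "continuous_on {0..1} p" "p ` {0..1} \<subseteq> cut_triangle" "continuous_on {0..1} \<psi>"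
      "\<And>t. t \<in> {0..1} \<Longrightarrow> F (p t) = exp (\<psi> t)"
    for p :: "real \<Rightarrow> real \<times> real" and \<psi> :: "real \<Rightarrow> complex"
    using continuous_logarithm_along_path[OF g that] .
  have corner: "F (1, 1) = exp (g (1, 1))"
    using g(2) by (simp add: cut_triangle_def)
  have "g (0, 1) - g (0, 0) = \<phi> 1 - \<phi> 0"
    by (intro side[of "\<lambda>t. (0, t)"])
      (use \<phi> in \<open>auto simp: cut_triangle_def intro!: continuous_intros\<close>)
  moreover have "g (1, 1) - g (0, 1) = g (1, 1) - g (1, 1)"
    by (intro side[of "\<lambda>t. (t, 1)" "\<lambda>t. g (1, 1)"])
      (use top corner in \<open>auto simp: cut_triangle_def intro!: continuous_intros\<close>)
  moreover have "g (1, 1) - g (0, 0) = g (1, 1) - g (1, 1)"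
    by (intro side[of "\<lambda>t. (t, t)" "\<lambda>t. g (1, 1)"])
      (use diagonal corner in \<open>auto simp: cut_triangle_def intro!: continuous_intros\<close>)
  ultimately show ?thesis
    by (simp add: algebra_simps)
qed

lemma rearranged_gap_boundary:
  assumes "\<gamma>' 1 = \<gamma>' 0" "\<gamma>' s \<noteq> 0" "\<gamma>' 1 \<noteq> 0"
  shows "rearranged_gap \<gamma> \<gamma>' 0 s = (\<gamma>' 0 / \<gamma>' s) * (\<gamma> 1 - \<gamma> 0)"
    and "rearranged_gap \<gamma> \<gamma>' s 1 = \<gamma> 1 - \<gamma> 0"
    and "rearranged_gap \<gamma> \<gamma>' s s = \<gamma> 1 - \<gamma> 0"
  using assms by (simp_all add: rearranged_gap_def field_simps)

lemma rearranged_gap_has_zero: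
  fixes \<gamma> \<gamma>' :: "real \<Rightarrow> complex" and \<theta> :: "real \<Rightarrow> real"
  assumes \<gamma>: "continuous_on {0..1} \<gamma>" and \<theta>: "continuous_on {0..1} \<theta>"
    and turn: "\<And>s. s \<in> {0..1} \<Longrightarrow> \<gamma>' s = k * exp (\<i> * of_real (\<theta> s))" and "k \<noteq> 0"
    and closed_tangent: "\<gamma>' 1 = \<gamma>' 0" and "\<theta> 1 \<noteq> \<theta> 0"
  obtains c1 c2 where "0 \<le> c1" "c1 \<le> c2" "c2 \<le> 1" "rearranged_gap \<gamma> \<gamma>' c1 c2 = 0"
proof -
  define F where "F x = rearranged_gap \<gamma> \<gamma>' (fst x) (snd x)" for x
  have nz: "\<gamma>' s \<noteq> 0" if "s \<in> {0..1}" for s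
    using turn[OF that] \<open>k \<noteq> 0\<close> by simp
  have "continuous_on {0..1} (\<lambda>s. k * exp (\<i> * of_real (\<theta> s)))"
    using \<theta> by (intro continuous_intros)
  then have "continuous_on {0..1} \<gamma>'"
    by (rule continuous_on_eq) (simp add: turn)
  then have "continuous_on cut_triangle F"
    unfolding F_def using continuous_on_rearranged_gap \<gamma> nz by blast
  have "\<exists>x\<in>cut_triangle. F x = 0"
  proof (rule ccontr)
    assume "\<not> (\<exists>x\<in>cut_triangle. F x = 0)"
    then have F_nz: "\<And>x. x \<in> cut_triangle \<Longrightarrow> F x \<noteq> 0"
      by blast
    have nz1: "\<gamma>' 1 \<noteq> 0"
      using nz by simp
    note boundary = rearranged_gap_boundary[OF closed_tangent _ nz1]
    define V where "V = \<gamma> 1 - \<gamma> 0"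
    have "V \<noteq> 0"
      using F_nz[of "(1, 1)"] boundary(3)[OF nz1] by (simp add: cut_triangle_def F_def V_def)
    have "F (0, t) = exp (\<i> * of_real (\<theta> 0 - \<theta> t) + Ln V)" if "t \<in> {0..1}" for t
    proof -
      have "F (0, t) = (\<gamma>' 0 / \<gamma>' t) * V"
        using boundary(1)[OF nz[OF that]] by (simp add: F_def V_def)
      also have "\<gamma>' 0 / \<gamma>' t = exp (\<i> * of_real (\<theta> 0 - \<theta> t))"
        using turn[OF that] turn[of 0] \<open>k \<noteq> 0\<close> by (simp add: exp_diff algebra_simps)
      finally show ?thesis
        using \<open>V \<noteq> 0\<close> by (simp add: exp_add)
    qed
    moreover have "F (t, 1) = F (1, 1)" "F (t, t) = F (1, 1)" if "t \<in> {0..1}" for t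
      using boundary(2,3) nz[OF that] nz1 by (simp_all add: F_def)
    moreover have "continuous_on {0..1} (\<lambda>t. \<i> * of_real (\<theta> 0 - \<theta> t) + Ln V)"
      using \<theta> by (intro continuous_intros)
    ultimately have "\<i> * of_real (\<theta> 0 - \<theta> 1) + Ln V = \<i> * of_real (\<theta> 0 - \<theta> 0) + Ln V"
      using no_winding_on_cut_triangle[OF \<open>continuous_on cut_triangle F\<close> F_nz] by blast
    then show False
      using \<open>\<theta> 1 \<noteq> \<theta> 0\<close> by simp
  qed
  then show ?thesis
    using that by (auto simp: cut_triangle_def F_def)
qed

theorem theorem3p1:
  fixes \<gamma> \<gamma>' :: "real \<Rightarrow> complex" and c :: real and \<theta> :: "real \<Rightarrow> real" and m :: int
  assumes deriv: "\<And>s. s \<in> {0..1} \<Longrightarrow> (\<gamma> has_vector_derivative \<gamma>' s) (at s within {0..1})"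
    and cont_deriv: "continuous_on {0..1} \<gamma>'"
    and c_pos: "c > 0"
    and speed: "\<And>s. s \<in> {0..1} \<Longrightarrow> norm (\<gamma>' s) = c"
    and theta_cont: "continuous_on {0..1} \<theta>"
    and theta_turn: "\<And>s. s \<in> {0..1} \<Longrightarrow> \<gamma>' s = complex_of_real c * Complex (cos (\<theta> s)) (sin (\<theta> s))"
    and total_turn: "\<theta> 1 - \<theta> 0 = 2 * pi * of_int m"
    and m_nz: "m \<noteq> 0"
  shows "\<exists>c1 c2. 0 \<le> c1 \<and> c1 \<le> c2 \<and> c2 \<le> 1 \<and>
           (let r = rearranged \<gamma> \<gamma>' c1 c2 in
              r 0 = r 1 \<and>
              (\<exists>r'. (\<forall>s\<in>{0..1}. (r has_vector_derivative r' s) (at s within {0..1})) \<and>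
                    continuous_on {0..1} r' \<and> r' 0 = r' 1))"
proof -
  have turn: "\<And>s. s \<in> {0..1} \<Longrightarrow> \<gamma>' s = of_real c * exp (\<i> * of_real (\<theta> s))"
    using theta_turn by (simp add: cis_conv_exp[symmetric] complex_eq_iff)
  have "exp (\<i> * of_real (\<theta> 1)) = exp (\<i> * of_real (\<theta> 0))"
    unfolding exp_eq using total_turn by (intro exI[of _ m]) (simp add: algebra_simps)
  then have closed_tangent: "\<gamma>' 1 = \<gamma>' 0"
    using turn[of 0] turn[of 1] by simp
  have "\<theta> 1 \<noteq> \<theta> 0"
    using total_turn m_nz by force
  have C1: "C1_curve (\<gamma>, \<gamma>', 0, 1)"
    using deriv cont_deriv by simp
  have "continuous_on {0..1} \<gamma>"
    using deriv has_vector_derivative_continuous continuous_on_eq_continuous_within by blast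
  moreover have "complex_of_real c \<noteq> 0"
    using c_pos by simp
  ultimately obtain c1 c2 where cuts: "0 \<le> c1" "c1 \<le> c2" "c2 \<le> 1"
    and gap: "rearranged_gap \<gamma> \<gamma>' c1 c2 = 0"
    using rearranged_gap_has_zero[OF _ theta_cont turn _ closed_tangent \<open>\<theta> 1 \<noteq> \<theta> 0\<close>] by blast
  have "\<gamma>' s \<noteq> 0" if "s \<in> {0..1}" for s
    using speed[OF that] c_pos by auto
  then obtain r' where r': "C1_curve (rearranged \<gamma> \<gamma>' c1 c2, r', 0, 1)" "r' 0 = \<gamma>' 0" "r' 1 = \<gamma>' 1"
    and "rearranged \<gamma> \<gamma>' c1 c2 1 - rearranged \<gamma> \<gamma>' c1 c2 0 = rearranged_gap \<gamma> \<gamma>' c1 c2"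
    using C1_curve_rearranged[OF C1 _ cuts] by blast
  then have "rearranged \<gamma> \<gamma>' c1 c2 0 = rearranged \<gamma> \<gamma>' c1 c2 1"
    using gap by simp
  then show ?thesis
    using cuts r' closed_tangent unfolding Let_def C1_curve.simps by metis
qed

end
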